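(* Let $\mathcal{A}$ be an alternative $W^{*}$-factor, $\mathcal{B}$ an alternative complex $\ast$-algebra, and $\Phi:\mathcal{A}\to\mathcal{B}$ a bijection. Let $p_{1}\in\mathcal{A}$ be a projection with $p_{1}\neq 1_{\mathcal{A}}$, $p_{2}=1_{\mathcal{A}}-p_{1}$, and $\mathcal{A}_{ij}=p_{i}\mathcal{A}p_{j}$. Let $a_{12},b_{12}\in\mathcal{A}_{12}$ and $c_{21},d_{21}\in\mathcal{A}_{21}$. If $\Phi$ preserves product $ab+ba^{*}$, then (i) $\Phi(a_{12}b_{12}+a_{12}^{*})=\Phi(a_{12}b_{12})+\Phi(a_{12}^{*})$ and (ii) $\Phi(c_{21}d_{21}+c_{21}^{*})=\Phi(c_{21}d_{21})+\Phi(c_{21}^{*})$. If $\Phi$ preserves product $ab-ba^{*}$, then (i) $\Phi(a_{12}b_{12}-a_{12}^{*})=\Phi(a_{12}b_{12})+\Phi(-a_{12}^{*})$ and (ii) $\Phi(c_{21}d_{21}-c_{21}^{*})=\Phi(c_{21}d_{21})+\Phi(-c_{21}^{*})$.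
   Context: An alternative $W^{*}$-factor is a prime alternative $C^{*}$-algebra (complete normed alternative complex $\ast$-algebra with $\|a^{*}a\|=\|a\|^{2}$) that is a dual Banach space; it is unital. A projection is a nonzero self-adjoint idempotent. $\mathcal{A}_{ij}$ are the Peirce components with respect to $p_{1}$. $\Phi$ preserves product $ab+ba^{*}$ (resp. $ab-ba^{*}$) if $\Phi(ab+ba^{*})=\Phi(a)\Phi(b)+\Phi(b)\Phi(a)^{*}$ (resp. $\Phi(ab-ba^{*})=\Phi(a)\Phi(b)-\Phi(b)\Phi(a)^{*}$) for all $a,b\in\mathcal{A}$. *)

theory Defs
  imports Complex_Main
begin

text \<open>The distribution has no class of complex vector spaces, so complex scalar
multiplication is an explicit parameter \<open>sm\<close>.\<close>

definition complex_vs :: "(complex \<Rightarrow> 'a::ab_group_add \<Rightarrow> 'a) \<Rightarrow> bool" where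
  "complex_vs sm \<longleftrightarrow>
     (\<forall>c x y. sm c (x + y) = sm c x + sm c y) \<and>
     (\<forall>c d x. sm (c + d) x = sm c x + sm d x) \<and>
     (\<forall>c d x. sm (c * d) x = sm c (sm d x)) \<and>
     (\<forall>x. sm 1 x = x)"

definition complex_nvs :: "(complex \<Rightarrow> 'a::real_normed_vector \<Rightarrow> 'a) \<Rightarrow> bool" where
  "complex_nvs sm \<longleftrightarrow>
     complex_vs sm \<and> (\<forall>r x. sm (complex_of_real r) x = r *\<^sub>R x) \<and>
     (\<forall>c x. norm (sm c x) = cmod c * norm x)"

text \<open>The product and the involution are explicit parameters, since Isabelle's
multiplication type classes are associative, whereas alternative algebras are not.\<close>

definition alt_algebra :: "(complex \<Rightarrow> 'a::ab_group_add \<Rightarrow> 'a) \<Rightarrow> ('a \<Rightarrow> 'a \<Rightarrow> 'a) \<Rightarrow> bool" where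
  "alt_algebra sm m \<longleftrightarrow>
     complex_vs sm \<and>
     (\<forall>x y z. m (x + y) z = m x z + m y z) \<and>
     (\<forall>x y z. m x (y + z) = m x y + m x z) \<and>
     (\<forall>c x y. m (sm c x) y = sm c (m x y)) \<and>
     (\<forall>c x y. m x (sm c y) = sm c (m x y)) \<and>
     (\<forall>x y. m x (m x y) = m (m x x) y) \<and>
     (\<forall>x y. m (m y x) x = m y (m x x))"

definition alt_star_algebra ::
    "(complex \<Rightarrow> 'a::ab_group_add \<Rightarrow> 'a) \<Rightarrow> ('a \<Rightarrow> 'a \<Rightarrow> 'a) \<Rightarrow> ('a \<Rightarrow> 'a) \<Rightarrow> bool" where
  "alt_star_algebra sm m s \<longleftrightarrow>
     alt_algebra sm m \<and>
     (\<forall>x y. s (x + y) = s x + s y) \<and>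
     (\<forall>c x. s (sm c x) = sm (cnj c) (s x)) \<and>
     (\<forall>x. s (s x) = x) \<and>
     (\<forall>x y. s (m x y) = m (s y) (s x))"

definition alt_cstar_algebra ::
    "(complex \<Rightarrow> 'a::{real_normed_vector,banach} \<Rightarrow> 'a) \<Rightarrow> ('a \<Rightarrow> 'a \<Rightarrow> 'a) \<Rightarrow> ('a \<Rightarrow> 'a) \<Rightarrow> bool" where
  "alt_cstar_algebra sm m s \<longleftrightarrow>
     complex_nvs sm \<and> alt_star_algebra sm m s \<and>
     (\<forall>x y. norm (m x y) \<le> norm x * norm y) \<and>
     (\<forall>x. norm (m (s x) x) = (norm x)\<^sup>2)"

definition alg_ideal :: "(complex \<Rightarrow> 'a::ab_group_add \<Rightarrow> 'a) \<Rightarrow> ('a \<Rightarrow> 'a \<Rightarrow> 'a) \<Rightarrow> 'a set \<Rightarrow> bool" where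
  "alg_ideal sm m I \<longleftrightarrow>
     0 \<in> I \<and> (\<forall>x\<in>I. \<forall>y\<in>I. x + y \<in> I) \<and> (\<forall>c. \<forall>x\<in>I. sm c x \<in> I) \<and>
     (\<forall>x\<in>I. \<forall>a. m a x \<in> I \<and> m x a \<in> I)"

definition prime_alg :: "(complex \<Rightarrow> 'a::ab_group_add \<Rightarrow> 'a) \<Rightarrow> ('a \<Rightarrow> 'a \<Rightarrow> 'a) \<Rightarrow> bool" where
  "prime_alg sm m \<longleftrightarrow>
     (\<forall>I J. alg_ideal sm m I \<and> alg_ideal sm m J \<and> (\<forall>x\<in>I. \<forall>y\<in>J. m x y = 0)
             \<longrightarrow> I = {0} \<or> J = {0})"

definition bdd_cfunctional :: "(complex \<Rightarrow> 'a::real_normed_vector \<Rightarrow> 'a) \<Rightarrow> ('a \<Rightarrow> complex) \<Rightarrow> bool" where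
  "bdd_cfunctional sm f \<longleftrightarrow>
     (\<forall>x y. f (x + y) = f x + f y) \<and> (\<forall>c x. f (sm c x) = c * f x) \<and>
     (\<exists>K. \<forall>x. cmod (f x) \<le> K * norm x)"

definition fnorm :: "('a::real_normed_vector \<Rightarrow> complex) \<Rightarrow> real" where
  "fnorm f = Sup {cmod (f x) | x. norm x \<le> 1}"

text \<open>A complex Banach space is a dual Banach space iff there is a closed subspace \<open>F\<close>
  of its (complex) dual such that the canonical map \<open>a \<mapsto> (f \<mapsto> f a)\<close> is an isometric
  isomorphism of the space onto \<open>F\<^sup>*\<close> (take \<open>F\<close> = canonical image of a predual).\<close>

definition dual_banach_space :: "(complex \<Rightarrow> 'a::{real_normed_vector,banach} \<Rightarrow> 'a) \<Rightarrow> bool" where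
  "dual_banach_space sm \<longleftrightarrow>
     (\<exists>F :: ('a \<Rightarrow> complex) set.
        F \<subseteq> {f. bdd_cfunctional sm f} \<and>
        (\<lambda>_. 0) \<in> F \<and> (\<forall>f\<in>F. \<forall>g\<in>F. (\<lambda>x. f x + g x) \<in> F) \<and>
        (\<forall>c. \<forall>f\<in>F. (\<lambda>x. c * f x) \<in> F) \<and>
        (\<forall>g h. (\<forall>n. g n \<in> F) \<and> bdd_cfunctional sm h \<and>
               (\<lambda>n. fnorm (\<lambda>x. g n x - h x)) \<longlonglongrightarrow> 0 \<longrightarrow> h \<in> F) \<and>
        (\<forall>a::'a. norm a = Sup {cmod (f a) | f. f \<in> F \<and> fnorm f \<le> 1}) \<and>
        (\<forall>\<phi> :: ('a \<Rightarrow> complex) \<Rightarrow> complex.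
           (\<forall>f\<in>F. \<forall>g\<in>F. \<phi> (\<lambda>x. f x + g x) = \<phi> f + \<phi> g) \<and>
           (\<forall>c. \<forall>f\<in>F. \<phi> (\<lambda>x. c * f x) = c * \<phi> f) \<and>
           (\<exists>K. \<forall>f\<in>F. cmod (\<phi> f) \<le> K * fnorm f)
           \<longrightarrow> (\<exists>a. \<forall>f\<in>F. \<phi> f = f a)))"

text \<open>An alternative W*-factor is a prime alternative C*-algebra which is a dual Banach
  space; such an algebra is unital, and \<open>e\<close> denotes its unit.\<close>

definition alt_W_factor ::
    "(complex \<Rightarrow> 'a::{real_normed_vector,banach} \<Rightarrow> 'a) \<Rightarrow> ('a \<Rightarrow> 'a \<Rightarrow> 'a) \<Rightarrow> ('a \<Rightarrow> 'a) \<Rightarrow> 'a \<Rightarrow> bool" where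
  "alt_W_factor sm m s e \<longleftrightarrow>
     alt_cstar_algebra sm m s \<and> prime_alg sm m \<and> dual_banach_space sm \<and>
     (\<forall>x. m e x = x \<and> m x e = x)"

definition projection :: "('a::zero \<Rightarrow> 'a \<Rightarrow> 'a) \<Rightarrow> ('a \<Rightarrow> 'a) \<Rightarrow> 'a \<Rightarrow> bool" where
  "projection m s p \<longleftrightarrow> p \<noteq> 0 \<and> s p = p \<and> m p p = p"

text \<open>Peirce component \<open>p A q\<close> (unambiguous by flexibility when \<open>q = 1 - p\<close>).\<close>

definition peirce :: "('a \<Rightarrow> 'a \<Rightarrow> 'a) \<Rightarrow> 'a \<Rightarrow> 'a \<Rightarrow> 'a set" where
  "peirce m p q = {m (m p x) q | x. True}"

definition preserves_plus ::
    "('a::plus \<Rightarrow> 'a \<Rightarrow> 'a) \<Rightarrow> ('a \<Rightarrow> 'a) \<Rightarrow>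
     ('b::plus \<Rightarrow> 'b \<Rightarrow> 'b) \<Rightarrow> ('b \<Rightarrow> 'b) \<Rightarrow> ('a \<Rightarrow> 'b) \<Rightarrow> bool" where
  "preserves_plus mA sA mB sB \<Phi> \<longleftrightarrow>
     (\<forall>a b. \<Phi> (mA a b + mA b (sA a)) = mB (\<Phi> a) (\<Phi> b) + mB (\<Phi> b) (sB (\<Phi> a)))"

definition preserves_minus ::
    "('a::minus \<Rightarrow> 'a \<Rightarrow> 'a) \<Rightarrow> ('a \<Rightarrow> 'a) \<Rightarrow>
     ('b::minus \<Rightarrow> 'b \<Rightarrow> 'b) \<Rightarrow> ('b \<Rightarrow> 'b) \<Rightarrow> ('a \<Rightarrow> 'b) \<Rightarrow> bool" where
  "preserves_minus mA sA mB sB \<Phi> \<longleftrightarrow>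
     (\<forall>a b. \<Phi> (mA a b - mA b (sA a)) = mB (\<Phi> a) (\<Phi> b) - mB (\<Phi> b) (sB (\<Phi> a)))"

end

theory Submission
  imports Defs
begin

text \<open>Write \<open>T\<^sub>\<sigma>(x, y) = x y + \<sigma> y x\<^sup>*\<close> with \<open>\<sigma> = \<plusminus>1\<close>, so that \<open>\<Phi>\<close> preserves
  \<open>T\<^sub>\<sigma>\<close>. With \<open>d = 2p - 1\<close>, an element \<open>t\<close> is determined by \<open>d \<circ> t = 2t\<^sub>1\<^sub>1 - 2t\<^sub>2\<^sub>2\<close>
  together with either \<open>[p, t] = t\<^sub>1\<^sub>2 - t\<^sub>2\<^sub>1\<close> or the pair \<open>T\<^sub>\<sigma>(t, p)\<close>, \<open>T\<^sub>\<sigma>(t, 1 - p)\<close>;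
  for a suitable scalar \<open>c\<close>, \<open>T\<^sub>\<sigma>(c d, t)\<close> and \<open>T\<^sub>\<sigma>(c p, t)\<close> are multiples of \<open>d \<circ> t\<close> and
  \<open>[p, t]\<close>. If \<open>\<Phi> t = \<Phi> y + \<Phi> z\<close>, then \<open>\<Phi> (T\<^sub>\<sigma>(x, t)) = \<Phi> (T\<^sub>\<sigma>(x, y)) + \<Phi> (T\<^sub>\<sigma>(x, z))\<close>,
  so by injectivity \<open>T\<^sub>\<sigma>(x, t) = T\<^sub>\<sigma>(x, y)\<close> whenever \<open>T\<^sub>\<sigma>(x, z) = 0\<close>; this forces
  \<open>t = y + z\<close> for \<open>y\<close>, \<open>z\<close> from suitable Peirce components. For \<open>a, b \<in> \<A>\<^sub>1\<^sub>2\<close>,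
  expanding \<open>T\<^sub>\<sigma>(a, (1 - p) + b)\<close> once by this additivity and once directly gives the
  claim; \<open>\<A>\<^sub>2\<^sub>1\<close> is the same with \<open>p\<close> and \<open>1 - p\<close> exchanged.\<close>

lemma additive_zero_minus:
  fixes f :: "'a::ab_group_add \<Rightarrow> 'b::ab_group_add"
  assumes "\<And>x y. f (x + y) = f x + f y"
  shows "f 0 = 0" "f (- x) = - f x" "f (x - y) = f x - f y"
proof -
  show zero: "f 0 = 0" using assms[of 0 0] by simp
  show minus: "f (- x) = - f x" for x
    using assms[of x "- x"] zero by (simp add: add_eq_0_iff)
  show "f (x - y) = f x - f y" using assms[of x "- y"] minus by simp
qed

lemma sum_list_map_additive:
  fixes f :: "'a::ab_group_add \<Rightarrow> 'b::ab_group_add"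
  assumes "\<And>x y. f (x + y) = f x + f y"
  shows "f (sum_list xs) = (\<Sum>x\<leftarrow>xs. f x)"
  using additive_zero_minus(1)[of f, OF assms] by (induction xs) (simp_all add: assms)

locale alt_star =
  fixes sm :: "complex \<Rightarrow> 'a::ab_group_add \<Rightarrow> 'a"
    and m :: "'a \<Rightarrow> 'a \<Rightarrow> 'a" and s :: "'a \<Rightarrow> 'a"
  assumes alt_star_algebra: "alt_star_algebra sm m s"
begin

lemma
  shows mult_add_left: "m (x + y) z = m x z + m y z"
    and mult_add_right: "m z (x + y) = m z x + m z y"
    and mult_scale_left: "m (sm c x) y = sm c (m x y)"
    and mult_scale_right: "m x (sm c y) = sm c (m x y)"
    and left_alternative: "m x (m x y) = m (m x x) y"
    and right_alternative: "m (m y x) x = m y (m x x)"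
    and scale_add_right: "sm c (x + y) = sm c x + sm c y"
    and scale_add_left: "sm (c + c') x = sm c x + sm c' x"
    and scale_scale: "sm (c * c') x = sm c (sm c' x)"
    and scale_one: "sm 1 x = x"
    and star_add: "s (x + y) = s x + s y"
    and star_scale: "s (sm c x) = sm (cnj c) (s x)"
    and star_star: "s (s x) = x"
    and star_mult: "s (m x y) = m (s y) (s x)"
  by (insert alt_star_algebra, simp_all add: alt_star_algebra_def alt_algebra_def complex_vs_def)

lemmas mult_zero_left = additive_zero_minus(1)[of "\<lambda>x. m x z", OF mult_add_left] for z
lemmas mult_zero_right = additive_zero_minus(1)[of "m z", OF mult_add_right] for z
lemmas mult_minus_left = additive_zero_minus(2)[of "\<lambda>x. m x z", OF mult_add_left] for z
lemmas mult_minus_right = additive_zero_minus(2)[of "m z", OF mult_add_right] for z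
lemmas mult_diff_left = additive_zero_minus(3)[of "\<lambda>x. m x z", OF mult_add_left] for z
lemmas mult_diff_right = additive_zero_minus(3)[of "m z", OF mult_add_right] for z
lemmas scale_zero_right = additive_zero_minus(1)[of "sm c", OF scale_add_right] for c
lemmas scale_minus_right = additive_zero_minus(2)[of "sm c", OF scale_add_right] for c
lemmas scale_diff_right = additive_zero_minus(3)[of "sm c", OF scale_add_right] for c
lemmas star_zero = additive_zero_minus(1)[of s, OF star_add]
lemmas star_diff = additive_zero_minus(3)[of s, OF star_add]

lemmas linear_simps = mult_add_left mult_add_right mult_diff_left mult_diff_right
  mult_minus_left mult_minus_right mult_scale_left mult_scale_right mult_zero_left mult_zero_right
  scale_add_right scale_diff_right scale_minus_right scale_zero_right

lemma scale_minus_one: "sm (- 1) x = - x"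
  using scale_add_left[of 1 "- 1" x] additive_zero_minus(1)[of "\<lambda>c. sm c x", OF scale_add_left]
  by (simp add: scale_one add_eq_0_iff)

lemma scale_minus_left: "sm (- c) x = - sm c x"
  using scale_scale[of "- 1" c x] by (simp add: scale_minus_one)

lemma scale_cancel:
  assumes "c \<noteq> 0" and "sm c x = sm c y"
  shows "x = y"
  using arg_cong[OF assms(2), of "sm (1 / c)"] assms(1)
  by (simp add: scale_scale[symmetric] scale_one)

lemma double_cancel:
  fixes x y :: 'a
  assumes "x + x = y + y"
  shows "x = y"
proof -
  have halves: "sm (1/2) z + sm (1/2) z = z" for z
    using scale_add_left[of "1/2" "1/2" z] by (simp add: scale_one)
  show ?thesis using arg_cong[OF assms, of "sm (1/2)"] halves[of x] halves[of y]
    by (simp add: scale_add_right)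
qed

lemma linear_left_alternative: "m x (m z y) + m z (m x y) = m (m x z) y + m (m z x) y"
  using left_alternative[of "x + z" y] by (simp add: linear_simps left_alternative algebra_simps)

lemma linear_right_alternative: "m (m y x) z + m (m y z) x = m y (m x z) + m y (m z x)"
  using right_alternative[of y "x + z"] by (simp add: linear_simps right_alternative algebra_simps)

definition T :: "complex \<Rightarrow> 'a \<Rightarrow> 'a \<Rightarrow> 'a" where
  "T \<sigma> x y = m x y + sm \<sigma> (m y (s x))"

lemma T_add_left: "T \<sigma> (x + y) z = T \<sigma> x z + T \<sigma> y z"
  unfolding T_def by (simp add: linear_simps star_add algebra_simps)

lemma T_add_right: "T \<sigma> z (x + y) = T \<sigma> z x + T \<sigma> z y"
  unfolding T_def by (simp add: linear_simps algebra_simps)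

lemmas T_zero_left = additive_zero_minus(1)[of "\<lambda>x. T \<sigma> x z", OF T_add_left] for \<sigma> z
lemmas T_zero_right = additive_zero_minus(1)[of "T \<sigma> z", OF T_add_right] for \<sigma> z
lemmas T_diff_left = additive_zero_minus(3)[of "\<lambda>x. T \<sigma> x z", OF T_add_left] for \<sigma> z

lemma T_scale_selfadjoint_left:
  assumes "s h = h"
  shows "T \<sigma> (sm c h) y = sm c (m h y) + sm (\<sigma> * cnj c) (m y h)"
  unfolding T_def using assms by (simp add: linear_simps star_scale scale_scale)

lemma star_unit:
  assumes "\<forall>x. m e x = x \<and> m x e = x"
  shows "s e = e"
  using assms star_mult[of "s e" e] by (metis star_star)

end

locale alt_star_proj = alt_star +
  fixes e p :: 'a
  assumes unit: "\<forall>x. m e x = x \<and> m x e = x"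
    and star_p: "s p = p" and idem_p: "m p p = p"
begin

lemma mult_e_left [simp]: "m e x = x" and mult_e_right [simp]: "m x e = x"
  using unit by blast+

lemma star_e [simp]: "s e = e"
  using star_unit unit by blast

lemma p_p_mult [simp]: "m p (m p y) = m p y"
  by (simp add: left_alternative idem_p)

lemma mult_p_p [simp]: "m (m y p) p = m y p"
  by (simp add: right_alternative idem_p)

lemma flexible_p [simp]: "m p (m y p) = m (m p y) p"
  using linear_right_alternative[of p y p] by (simp add: idem_p)

definition "in_A11 y \<longleftrightarrow> m p y = y \<and> m y p = y"
definition "in_A12 y \<longleftrightarrow> m p y = y \<and> m y p = 0"
definition "in_A21 y \<longleftrightarrow> m p y = 0 \<and> m y p = y"
definition "in_A22 y \<longleftrightarrow> m p y = 0 \<and> m y p = 0"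

definition "P11 y = m (m p y) p"
definition "P12 y = m p y - m (m p y) p"
definition "P21 y = m y p - m (m p y) p"
definition "P22 y = y - m p y - m y p + m (m p y) p"

lemma peirce_decomposition: "y = P11 y + P12 y + P21 y + P22 y"
  unfolding P11_def P12_def P21_def P22_def by (simp add: algebra_simps)

lemma peirce_12_in_A12: "x \<in> peirce m p (e - p) \<Longrightarrow> in_A12 x"
  unfolding peirce_def in_A12_def by (auto simp: linear_simps)

lemma in_A22_complement: "in_A22 (e - p)"
  unfolding in_A22_def by (simp add: linear_simps idem_p)

lemma in_A12_scale: "in_A12 y \<Longrightarrow> in_A12 (sm c y)"
  and in_A11_scale: "in_A11 y \<Longrightarrow> in_A11 (sm c y)"
  and in_A21_scale: "in_A21 y \<Longrightarrow> in_A21 (sm c y)"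
  and in_A21_add: "in_A21 y \<Longrightarrow> in_A21 z \<Longrightarrow> in_A21 (y + z)"
  and in_A21_minus: "in_A21 y \<Longrightarrow> in_A21 (- y)"
  unfolding in_A11_def in_A12_def in_A21_def by (simp_all add: linear_simps)

lemma star_in_A12: "in_A12 y \<Longrightarrow> in_A21 (s y)"
  and star_in_A21: "in_A21 y \<Longrightarrow> in_A12 (s y)"
proof -
  have "m p (s y) = s (m y p)" "m (s y) p = s (m p y)"
    by (simp_all add: star_mult star_p)
  then show "in_A12 y \<Longrightarrow> in_A21 (s y)" "in_A21 y \<Longrightarrow> in_A12 (s y)"
    unfolding in_A12_def in_A21_def by (auto simp: star_zero)
qed

lemma mult_A12_A12: "in_A12 a \<Longrightarrow> in_A12 b \<Longrightarrow> in_A21 (m a b)"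
  unfolding in_A12_def in_A21_def
  using linear_left_alternative[of p a b] linear_right_alternative[of a b p]
  by (simp add: linear_simps)

lemma mult_A12_A21: "in_A12 b \<Longrightarrow> in_A21 v \<Longrightarrow> in_A11 (m b v)"
  unfolding in_A12_def in_A21_def in_A11_def
  using linear_left_alternative[of p b v] linear_right_alternative[of b v p]
  by (simp add: linear_simps)

definition "d = p + p - e"
definition "jordan_d y = m d y + m y d"
definition "commutator_p y = m p y - m y p"

lemma star_d: "s d = d"
  unfolding d_def by (simp add: star_add star_diff star_p)

lemma jordan_d_add: "jordan_d (x + y) = jordan_d x + jordan_d y"
  and commutator_p_add: "commutator_p (x + y) = commutator_p x + commutator_p y"
  unfolding jordan_d_def commutator_p_def by (simp_all add: linear_simps algebra_simps)

lemmas jordan_d_diff = additive_zero_minus(3)[of jordan_d, OF jordan_d_add]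
lemmas commutator_p_diff = additive_zero_minus(3)[of commutator_p, OF commutator_p_add]

lemma jordan_d_A12: "in_A12 y \<Longrightarrow> jordan_d y = 0"
  and jordan_d_A21: "in_A21 y \<Longrightarrow> jordan_d y = 0"
  unfolding jordan_d_def d_def in_A12_def in_A21_def by (simp_all add: linear_simps algebra_simps)

lemma commutator_p_A11: "in_A11 y \<Longrightarrow> commutator_p y = 0"
  and commutator_p_A12: "in_A12 y \<Longrightarrow> commutator_p y = y"
  and commutator_p_A21: "in_A21 y \<Longrightarrow> commutator_p y = - y"
  and commutator_p_A22: "in_A22 y \<Longrightarrow> commutator_p y = 0"
  unfolding commutator_p_def in_A11_def in_A12_def in_A21_def in_A22_def by simp_all

lemma T_A12_p: "in_A12 y \<Longrightarrow> T \<sigma> y p = 0"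
  using star_in_A12[of y] unfolding T_def in_A12_def in_A21_def by (simp add: linear_simps star_p)

lemma T_A21_complement: "in_A21 y \<Longrightarrow> T \<sigma> y (e - p) = 0"
  using star_in_A21[of y]
  unfolding T_def in_A12_def in_A21_def by (simp add: linear_simps star_p star_diff)

lemma double_eq_zero: "x + x = 0 \<Longrightarrow> x = (0::'a)"
  using double_cancel[of x 0] by simp

lemma P11_jordan_d: "P11 (jordan_d y) = P11 y + P11 y"
  and P22_jordan_d: "P22 (jordan_d y) = - (P22 y + P22 y)"
  and P12_commutator_p: "P12 (commutator_p y) = P12 y"
  and P21_commutator_p: "P21 (commutator_p y) = - P21 y"
  unfolding P11_def P12_def P21_def P22_def jordan_d_def commutator_p_def d_def
  by (simp_all add: linear_simps algebra_simps)

lemma P21_T_p: "P21 (T \<sigma> y p) = P21 y"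
  unfolding P21_def T_def by (simp add: linear_simps algebra_simps)

lemma P12_T_complement: "P12 (T \<sigma> y (e - p)) = P12 y"
  unfolding P12_def T_def by (simp add: linear_simps algebra_simps star_diff star_p)

lemma P_zero: "P11 0 = 0" "P12 0 = 0" "P21 0 = 0" "P22 0 = 0"
  unfolding P11_def P12_def P21_def P22_def by (simp_all add: linear_simps)

lemma diagonal_zero_if_jordan_d_zero:
  assumes "jordan_d x = 0"
  shows "P11 x = 0 \<and> P22 x = 0"
proof -
  have "P11 x + P11 x = 0" and "- (P22 x + P22 x) = 0"
    using P11_jordan_d[of x] P22_jordan_d[of x] assms by (simp_all only: P_zero)
  then show ?thesis using double_eq_zero neg_equal_0_iff_equal by metis
qed

lemma eq_zero_if_jordan_d_commutator_p_zero:
  assumes "jordan_d x = 0" and "commutator_p x = 0"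
  shows "x = 0"
proof -
  have "P11 x = 0" "P22 x = 0"
    using diagonal_zero_if_jordan_d_zero[OF assms(1)] by simp_all
  moreover have "P12 x = 0" "P21 x = 0"
    using P12_commutator_p[of x] P21_commutator_p[of x] assms(2) by (simp_all add: P_zero)
  ultimately show ?thesis using peirce_decomposition[of x] by simp
qed

lemma eq_zero_if_jordan_d_T_zero:
  assumes "jordan_d x = 0" and "T \<sigma> x p = 0" and "T \<sigma> x (e - p) = 0"
  shows "x = 0"
proof -
  have "P11 x = 0" "P22 x = 0"
    using diagonal_zero_if_jordan_d_zero[OF assms(1)] by simp_all
  moreover have "P12 x = 0" "P21 x = 0"
    using P12_T_complement[of \<sigma> x] P21_T_p[of \<sigma> x] assms(2,3) by (simp_all add: P_zero)
  ultimately show ?thesis using peirce_decomposition[of x] by simp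
qed

lemma eq_if_jordan_d_commutator_p_eq:
  assumes "jordan_d t = jordan_d y" and "commutator_p t = commutator_p y"
  shows "t = y"
  using eq_zero_if_jordan_d_commutator_p_zero[of "t - y"] assms
  by (simp add: jordan_d_diff commutator_p_diff)

lemma eq_if_jordan_d_T_eq:
  assumes "jordan_d t = jordan_d y"
    and "T \<sigma> t p = T \<sigma> y p" and "T \<sigma> t (e - p) = T \<sigma> y (e - p)"
  shows "t = y"
  using eq_zero_if_jordan_d_T_zero[of "t - y" \<sigma>] assms by (simp add: jordan_d_diff T_diff_left)

lemma T_scale_d: "\<sigma> * cnj c = c \<Longrightarrow> T \<sigma> (sm c d) y = sm c (jordan_d y)"
  unfolding jordan_d_def by (simp add: T_scale_selfadjoint_left star_d scale_add_right)

lemma T_scale_p: "\<sigma> * cnj c = - c \<Longrightarrow> T \<sigma> (sm c p) y = sm c (commutator_p y)"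
  unfolding commutator_p_def
  by (simp add: T_scale_selfadjoint_left star_p scale_diff_right scale_minus_left)

lemma complement_proj: "alt_star_proj sm m s e (e - p)"
  by unfold_locales (simp_all add: unit star_diff star_p idem_p linear_simps)

end

lemma preserves_plus_T:
  assumes "alt_star smA mA sA" and "alt_star smB mB sB"
  shows "preserves_plus mA sA mB sB \<Phi> \<longleftrightarrow>
    (\<forall>x y. \<Phi> (alt_star.T smA mA sA 1 x y) = alt_star.T smB mB sB 1 (\<Phi> x) (\<Phi> y))"
  using assms by (simp add: preserves_plus_def alt_star.T_def alt_star.scale_one)

lemma preserves_minus_T:
  assumes "alt_star smA mA sA" and "alt_star smB mB sB"
  shows "preserves_minus mA sA mB sB \<Phi> \<longleftrightarrow>
    (\<forall>x y. \<Phi> (alt_star.T smA mA sA (- 1) x y) = alt_star.T smB mB sB (- 1) (\<Phi> x) (\<Phi> y))"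
  using assms by (simp add: preserves_minus_def alt_star.T_def alt_star.scale_minus_one)

locale T_preserver = alt_star_proj smA mA sA e p + B: alt_star smB mB sB
  for smA :: "complex \<Rightarrow> 'a::ab_group_add \<Rightarrow> 'a" and mA sA e p
    and smB :: "complex \<Rightarrow> 'b::ab_group_add \<Rightarrow> 'b" and mB sB +
  fixes \<Phi> :: "'a \<Rightarrow> 'b" and \<sigma> :: complex
  assumes bij: "bij \<Phi>" and sign: "\<sigma> = 1 \<or> \<sigma> = - 1"
    and preserves_T: "\<Phi> (T \<sigma> x y) = B.T \<sigma> (\<Phi> x) (\<Phi> y)"
begin

lemma Phi_inj: "\<Phi> x = \<Phi> y \<Longrightarrow> x = y"
  using bij by (simp add: bij_def inj_eq)

lemma Phi_surj: obtains t where "\<Phi> t = z"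
  using bij by (metis bij_def surjD)

lemma Phi_zero [simp]: "\<Phi> 0 = 0"
proof -
  obtain z where z: "\<Phi> z = 0" using Phi_surj .
  have "\<Phi> 0 = \<Phi> (T \<sigma> z 0)"
    by (simp add: T_zero_right)
  also have "\<dots> = 0"
    using preserves_T z by (simp add: B.T_zero_left)
  finally show ?thesis .
qed

lemma Phi_T_sum_right:
  "\<Phi> t = (\<Sum>y\<leftarrow>ys. \<Phi> y) \<Longrightarrow> \<Phi> (T \<sigma> x t) = (\<Sum>y\<leftarrow>ys. \<Phi> (T \<sigma> x y))"
  using sum_list_map_additive[of "B.T \<sigma> (\<Phi> x)" "map \<Phi> ys", OF B.T_add_right]
  by (simp add: preserves_T comp_def)

lemma Phi_T_sum_left:
  "\<Phi> t = (\<Sum>y\<leftarrow>ys. \<Phi> y) \<Longrightarrow> \<Phi> (T \<sigma> t x) = (\<Sum>y\<leftarrow>ys. \<Phi> (T \<sigma> y x))"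
  using sum_list_map_additive[of "\<lambda>u. B.T \<sigma> u (\<Phi> x)" "map \<Phi> ys", OF B.T_add_left]
  by (simp add: preserves_T comp_def)

lemma T_right_pinned:
  assumes "\<Phi> t = \<Phi> y + (\<Sum>z\<leftarrow>zs. \<Phi> z)" and "\<forall>z\<in>set zs. T \<sigma> x z = 0"
  shows "T \<sigma> x t = T \<sigma> x y"
proof (rule Phi_inj)
  have "(\<Sum>z\<leftarrow>zs. \<Phi> (T \<sigma> x z)) = 0"
    using assms(2) by (induction zs) simp_all
  then show "\<Phi> (T \<sigma> x t) = \<Phi> (T \<sigma> x y)"
    using Phi_T_sum_right[of t "y # zs" x] assms(1) by simp
qed

lemma T_left_pinned:
  assumes "\<Phi> t = \<Phi> y + (\<Sum>z\<leftarrow>zs. \<Phi> z)" and "\<forall>z\<in>set zs. T \<sigma> z x = 0"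
  shows "T \<sigma> t x = T \<sigma> y x"
proof (rule Phi_inj)
  have "(\<Sum>z\<leftarrow>zs. \<Phi> (T \<sigma> z x)) = 0"
    using assms(2) by (induction zs) simp_all
  then show "\<Phi> (T \<sigma> t x) = \<Phi> (T \<sigma> y x)"
    using Phi_T_sum_left[of t "y # zs" x] assms(1) by simp
qed

lemma exists_scalar_fixed: obtains c where "c \<noteq> 0" "\<sigma> * cnj c = c"
  using sign that[of 1] that[of \<i>] by auto

lemma exists_scalar_skew: obtains c where "c \<noteq> 0" "\<sigma> * cnj c = - c"
  using sign that[of 1] that[of \<i>] by auto

lemma jordan_d_pinned:
  assumes "\<Phi> t = \<Phi> y + (\<Sum>z\<leftarrow>zs. \<Phi> z)" and "\<forall>z\<in>set zs. jordan_d z = 0"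
  shows "jordan_d t = jordan_d y"
proof -
  obtain c where c: "c \<noteq> 0" "\<sigma> * cnj c = c" using exists_scalar_fixed .
  have "T \<sigma> (smA c d) t = T \<sigma> (smA c d) y"
    using assms(2)
    by (intro T_right_pinned[OF assms(1)]) (simp add: T_scale_d[OF c(2)] scale_zero_right)
  then show ?thesis using c by (simp add: T_scale_d scale_cancel)
qed

lemma commutator_p_pinned:
  assumes "\<Phi> t = \<Phi> y + (\<Sum>z\<leftarrow>zs. \<Phi> z)" and "\<forall>z\<in>set zs. commutator_p z = 0"
  shows "commutator_p t = commutator_p y"
proof -
  obtain c where c: "c \<noteq> 0" "\<sigma> * cnj c = - c" using exists_scalar_skew .
  have "T \<sigma> (smA c p) t = T \<sigma> (smA c p) y"
    using assms(2)
    by (intro T_right_pinned[OF assms(1)]) (simp add: T_scale_p[OF c(2)] scale_zero_right)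
  then show ?thesis using c by (simp add: T_scale_p scale_cancel)
qed

lemma additive_complement_A12:
  assumes b: "in_A12 b"
  shows "\<Phi> ((e - p) + b) = \<Phi> (e - p) + \<Phi> b"
proof -
  obtain t where t: "\<Phi> t = \<Phi> (e - p) + \<Phi> b" using Phi_surj .
  have "jordan_d t = jordan_d (e - p)"
    using jordan_d_pinned[of t "e - p" "[b]"] t jordan_d_A12[OF b] by simp
  moreover have "commutator_p t = commutator_p b"
    using commutator_p_pinned[of t b "[e - p]"] t commutator_p_A22[OF in_A22_complement]
    by (simp add: add.commute)
  moreover have "jordan_d (e - p + b) = jordan_d (e - p)"
    and "commutator_p (e - p + b) = commutator_p b"
    by (simp_all add: jordan_d_add commutator_p_add jordan_d_A12[OF b]
        commutator_p_A22[OF in_A22_complement])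
  ultimately have "t = (e - p) + b" by (metis eq_if_jordan_d_commutator_p_eq)
  then show ?thesis using t by simp
qed

lemma additive_A12_A21:
  assumes a: "in_A12 a" and z: "in_A21 z"
  shows "\<Phi> (a + z) = \<Phi> a + \<Phi> z"
proof -
  obtain t where t: "\<Phi> t = \<Phi> a + \<Phi> z" using Phi_surj .
  have "jordan_d t = jordan_d a"
    using jordan_d_pinned[of t a "[z]"] t jordan_d_A21[OF z] by simp
  moreover have "T \<sigma> t p = T \<sigma> z p"
    using T_left_pinned[of t z "[a]" p] t T_A12_p[OF a] by (simp add: add.commute)
  moreover have "T \<sigma> t (e - p) = T \<sigma> a (e - p)"
    using T_left_pinned[of t a "[z]" "e - p"] t T_A21_complement[OF z] by simp
  moreover have "jordan_d (a + z) = jordan_d a" "T \<sigma> (a + z) p = T \<sigma> z p"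
    "T \<sigma> (a + z) (e - p) = T \<sigma> a (e - p)"
    by (simp_all add: jordan_d_add jordan_d_A21[OF z] T_add_left T_A12_p[OF a]
        T_A21_complement[OF z])
  ultimately have "t = a + z" by (metis eq_if_jordan_d_T_eq)
  then show ?thesis using t by simp
qed

lemma additive_A21_A11:
  assumes u: "in_A21 u" and w: "in_A11 w"
  shows "\<Phi> (u + w) = \<Phi> u + \<Phi> w"
proof -
  obtain t where t: "\<Phi> t = \<Phi> u + \<Phi> w" using Phi_surj .
  have "jordan_d t = jordan_d w"
    using jordan_d_pinned[of t w "[u]"] t jordan_d_A21[OF u] by (simp add: add.commute)
  moreover have "commutator_p t = commutator_p u"
    using commutator_p_pinned[of t u "[w]"] t commutator_p_A11[OF w] by simp
  moreover have "jordan_d (u + w) = jordan_d w" "commutator_p (u + w) = commutator_p u"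
    by (simp_all add: jordan_d_add commutator_p_add jordan_d_A21[OF u] commutator_p_A11[OF w])
  ultimately have "t = u + w" by (metis eq_if_jordan_d_commutator_p_eq)
  then show ?thesis using t by simp
qed

text \<open>Here \<open>[p, t]\<close> cannot be pinned by a single summand, since it vanishes on
  neither \<open>a\<close> nor \<open>z\<close>; the two contributions are recombined by the previous lemma.\<close>

lemma additive_A12_A21_A11:
  assumes a: "in_A12 a" and z: "in_A21 z" and w: "in_A11 w"
  shows "\<Phi> (a + z + w) = \<Phi> a + \<Phi> z + \<Phi> w"
proof -
  obtain t where t: "\<Phi> t = \<Phi> a + \<Phi> z + \<Phi> w" using Phi_surj .
  obtain c where c: "c \<noteq> 0" "\<sigma> * cnj c = - c" using exists_scalar_skew .
  have commutator_sum: "commutator_p (a + z + w) = a - z"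
    by (simp add: commutator_p_add commutator_p_A12[OF a] commutator_p_A21[OF z]
        commutator_p_A11[OF w])
  have "jordan_d t = jordan_d w"
    using jordan_d_pinned[of t w "[a, z]"] t jordan_d_A12[OF a] jordan_d_A21[OF z]
    by (simp add: algebra_simps)
  moreover have "commutator_p t = commutator_p (a + z + w)"
  proof -
    have "\<Phi> (T \<sigma> (smA c p) t) = \<Phi> (smA c a) + \<Phi> (smA c (- z))"
      using Phi_T_sum_right[of t "[a, z, w]" "smA c p"] t
      by (simp add: T_scale_p[OF c(2)] commutator_p_A12[OF a] commutator_p_A21[OF z]
          commutator_p_A11[OF w] scale_zero_right add.assoc)
    also have "\<dots> = \<Phi> (T \<sigma> (smA c p) (a + z + w))"
      using additive_A12_A21[OF in_A12_scale[OF a] in_A21_scale[OF in_A21_minus[OF z]]]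
      by (simp add: T_scale_p[OF c(2)] commutator_sum scale_add_right scale_diff_right
          scale_minus_right)
    finally have "smA c (commutator_p t) = smA c (commutator_p (a + z + w))"
      using Phi_inj by (simp add: T_scale_p[OF c(2)])
    then show ?thesis using c(1) by (rule scale_cancel[rotated])
  qed
  moreover have "jordan_d (a + z + w) = jordan_d w"
    by (simp add: jordan_d_add jordan_d_A12[OF a] jordan_d_A21[OF z])
  ultimately have "t = a + z + w" by (metis eq_if_jordan_d_commutator_p_eq)
  then show ?thesis using t by simp
qed

lemma additive_A12_product_star:
  assumes a: "in_A12 a" and b: "in_A12 b"
  shows "\<Phi> (mA a b + smA \<sigma> (sA a)) = \<Phi> (mA a b) + \<Phi> (smA \<sigma> (sA a))"
proof -
  define u v w where "u = mA a b" and "v = smA \<sigma> (sA a)" and "w = smA \<sigma> (mA b (sA a))"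
  have u: "in_A21 u" using mult_A12_A12[OF a b] by (simp add: u_def)
  have v: "in_A21 v" using in_A21_scale[OF star_in_A12[OF a]] by (simp add: v_def)
  have w: "in_A11 w"
    using in_A11_scale[OF mult_A12_A21[OF b star_in_A12[OF a]]] by (simp add: w_def)
  have a_complement: "mA a (e - p) = a" and complement_star: "mA (e - p) (sA a) = sA a"
    using a star_in_A12[OF a] unfolding in_A12_def in_A21_def by (simp_all add: linear_simps)
  have "\<Phi> a + \<Phi> (u + v) + \<Phi> w = \<Phi> (T \<sigma> a ((e - p) + b))"
    using additive_A12_A21_A11[OF a in_A21_add[OF u v] w] a_complement complement_star
    by (simp add: T_def u_def v_def w_def linear_simps algebra_simps)
  also have "\<dots> = \<Phi> (T \<sigma> a (e - p)) + \<Phi> (T \<sigma> a b)"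
    using Phi_T_sum_right[of "(e - p) + b" "[e - p, b]" a] additive_complement_A12[OF b] by simp
  also have "\<dots> = \<Phi> (a + v) + \<Phi> (u + w)"
    using a_complement complement_star by (simp add: T_def u_def v_def w_def)
  also have "\<dots> = \<Phi> a + \<Phi> v + (\<Phi> u + \<Phi> w)"
    using additive_A12_A21[OF a v] additive_A21_A11[OF u w] by simp
  finally show ?thesis unfolding u_def v_def by (simp add: algebra_simps)
qed

lemma additive_peirce_12_product_star:
  assumes "a \<in> peirce mA p (e - p)" and "b \<in> peirce mA p (e - p)"
  shows "\<Phi> (mA a b + smA \<sigma> (sA a)) = \<Phi> (mA a b) + \<Phi> (smA \<sigma> (sA a))"
  using additive_A12_product_star peirce_12_in_A12 assms by blast

end

theorem claim2p5:
  fixes smA :: "complex \<Rightarrow> 'a::{real_normed_vector,banach} \<Rightarrow> 'a"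
    and mA :: "'a \<Rightarrow> 'a \<Rightarrow> 'a"
    and sA :: "'a \<Rightarrow> 'a" and e :: 'a
    and smB :: "complex \<Rightarrow> 'b::ab_group_add \<Rightarrow> 'b"
    and mB :: "'b \<Rightarrow> 'b \<Rightarrow> 'b" and sB :: "'b \<Rightarrow> 'b"
    and \<Phi> :: "'a \<Rightarrow> 'b"
    and p1 a12 b12 c21 d21 :: 'a
  assumes "alt_W_factor smA mA sA e"
    and "alt_star_algebra smB mB sB"
    and "bij \<Phi>"
    and "projection mA sA p1" and "p1 \<noteq> e"
    and "a12 \<in> peirce mA p1 (e - p1)" and "b12 \<in> peirce mA p1 (e - p1)"
    and "c21 \<in> peirce mA (e - p1) p1" and "d21 \<in> peirce mA (e - p1) p1"
  shows "(preserves_plus mA sA mB sB \<Phi> \<longrightarrow>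
            \<Phi> (mA a12 b12 + sA a12) = \<Phi> (mA a12 b12) + \<Phi> (sA a12) \<and>
            \<Phi> (mA c21 d21 + sA c21) = \<Phi> (mA c21 d21) + \<Phi> (sA c21)) \<and>
         (preserves_minus mA sA mB sB \<Phi> \<longrightarrow>
            \<Phi> (mA a12 b12 - sA a12) = \<Phi> (mA a12 b12) + \<Phi> (- sA a12) \<and>
            \<Phi> (mA c21 d21 - sA c21) = \<Phi> (mA c21 d21) + \<Phi> (- sA c21))"
proof -
  have A: "alt_star smA mA sA" and B: "alt_star smB mB sB"
    using assms(1,2) by (simp_all add: alt_star_def alt_W_factor_def alt_cstar_algebra_def)
  have proj: "alt_star_proj smA mA sA e p1"
    using A assms(1,4)
    by (simp add: alt_star_proj_def alt_star_proj_axioms_def alt_W_factor_def projection_def)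
  have c21: "c21 \<in> peirce mA (e - p1) (e - (e - p1))"
    and d21: "d21 \<in> peirce mA (e - p1) (e - (e - p1))"
    using assms(8,9) by simp_all
  have main: "\<Phi> (mA a12 b12 + smA \<sigma> (sA a12)) = \<Phi> (mA a12 b12) + \<Phi> (smA \<sigma> (sA a12)) \<and>
      \<Phi> (mA c21 d21 + smA \<sigma> (sA c21)) = \<Phi> (mA c21 d21) + \<Phi> (smA \<sigma> (sA c21))"
    if "\<sigma> = 1 \<or> \<sigma> = - 1"
      and "\<forall>x y. \<Phi> (alt_star.T smA mA sA \<sigma> x y) = alt_star.T smB mB sB \<sigma> (\<Phi> x) (\<Phi> y)"
    for \<sigma>
    using T_preserver.additive_peirce_12_product_star[OF _ assms(6,7)]
      T_preserver.additive_peirce_12_product_star[OF _ c21 d21]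
      T_preserver.intro[OF proj B] T_preserver.intro[OF alt_star_proj.complement_proj[OF proj] B]
      T_preserver_axioms.intro[OF assms(3) that(1) that(2)[rule_format]]
    by blast
  show ?thesis
    using main[of 1] main[of "- 1"] preserves_plus_T[OF A B] preserves_minus_T[OF A B]
    by (simp add: alt_star.scale_one[OF A] alt_star.scale_minus_one[OF A])
qed

end
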